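(* Let $\lambda\in\mathbb T$, $n\in\mathbb N$ and $f\in\mathcal H_{\sigma,n-1}$. Then $((z-\lambda)f)^{(n)}(z)=0$ for all $z\in\mathbb D$ if and only if $D_{\sigma,n-1}(f)=0$.
   Context: $\mathbb D$ open unit disc, $\mathbb T$ unit circle. For $f=\sum_ka_kz^k\in\mathcal O(\mathbb D)$ and $j\ge0$, $D_{\sigma,j}(f)=\sum_{k\ge j}\binom kj|a_k|^2$ and $\mathcal H_{\sigma,j}=\{f\in\mathcal O(\mathbb D):D_{\sigma,j}(f)<\infty\}$. *)

theory Defs
  imports "HOL-Complex_Analysis.Complex_Analysis"
begin

definition taylor_coeff :: "(complex \<Rightarrow> complex) \<Rightarrow> nat \<Rightarrow> complex" where
  "taylor_coeff f k = (deriv ^^ k) f 0 / of_nat (fact k)"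

definition D_sigma :: "nat \<Rightarrow> (complex \<Rightarrow> complex) \<Rightarrow> real" where
  "D_sigma j f = (\<Sum>\<^sub>\<infinity>k\<in>{j..}. real (k choose j) * (cmod (taylor_coeff f k))\<^sup>2)"

definition H_sigma :: "nat \<Rightarrow> (complex \<Rightarrow> complex) set" where
  "H_sigma j = {f. f holomorphic_on ball 0 1 \<and>
     (\<lambda>k. real (k choose j) * (cmod (taylor_coeff f k))\<^sup>2) summable_on {j..}}"

end

theory Submission
  imports Defs "HOL-Computational_Algebra.Polynomial"
begin

text \<open>Let a_k be the Taylor coefficients of f. Those of (z - lam) f are a_(k-1) - lam a_k,
  and a function holomorphic on the disc has vanishing n-th derivative iff its Taylor coefficients
  vanish from index n on. So the left-hand side says a_k = lam a_(k+1) for k >= n - 1. Since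
  |lam| = 1, all |a_k| with k >= n - 1 then equal |a_(n-1)|, while the terms
  (k choose n-1) |a_k|^2 >= |a_(n-1)|^2 of the convergent series D_(sigma,n-1)(f) tend to 0.
  Hence these coefficients vanish, which is exactly D_(sigma,n-1)(f) = 0.\<close>

lemma higher_deriv_ident_minus_const:
  "(deriv ^^ n) (\<lambda>w. w - c) = (\<lambda>z::complex. if n = 0 then z - c else if n = 1 then 1 else 0)"
  by (induction n) auto

lemma higher_deriv_linear_factor:
  fixes f :: "complex \<Rightarrow> complex"
  assumes "f holomorphic_on S" "open S" "z \<in> S"
  shows "(deriv ^^ Suc k) (\<lambda>w. (w - c) * f w) z
           = of_nat (Suc k) * (deriv ^^ k) f z + (z - c) * (deriv ^^ Suc k) f z"
proof -
  define summand where "summand i = of_nat (Suc k choose i) * (deriv ^^ i) (\<lambda>w. w - c) z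
                                * (deriv ^^ (Suc k - i)) f z" for i
  have "(deriv ^^ Suc k) (\<lambda>w. (w - c) * f w) z = (\<Sum>i = 0..Suc k. summand i)"
    unfolding summand_def by (rule higher_deriv_mult) (use assms in \<open>auto intro: holomorphic_intros\<close>)
  also have "\<dots> = (\<Sum>i \<in> {0, 1}. summand i)"
    by (rule sum.mono_neutral_right) (auto simp: summand_def higher_deriv_ident_minus_const)
  also have "\<dots> = of_nat (Suc k) * (deriv ^^ k) f z + (z - c) * (deriv ^^ Suc k) f z"
    by (simp add: summand_def higher_deriv_ident_minus_const)
  finally show ?thesis .
qed

lemma taylor_coeff_linear_factor:
  assumes "f holomorphic_on S" "open S" "0 \<in> S"
  shows "taylor_coeff (\<lambda>w. (w - c) * f w) (Suc k) = taylor_coeff f k - c * taylor_coeff f (Suc k)"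
proof -
  have "(fact (Suc k) :: complex) = of_nat (Suc k) * fact k"
    by (simp add: fact_Suc)
  then show ?thesis
    unfolding taylor_coeff_def higher_deriv_linear_factor[OF assms]
    by (simp add: field_simps del: funpow.simps of_nat_Suc fact_Suc)
qed

lemma taylor_coeff_sums:
  assumes "f holomorphic_on ball 0 r" "w \<in> ball 0 r"
  shows "(\<lambda>k. taylor_coeff f k * w ^ k) sums f w"
  using holomorphic_power_series[OF assms] by (simp add: taylor_coeff_def)

lemma higher_deriv_poly: "(deriv ^^ n) (poly p) = poly ((pderiv ^^ n) (p :: complex poly))"
proof (induction n)
  case (Suc n)
  have "deriv (poly q) = poly (pderiv q)" for q :: "complex poly"
    by (rule ext, rule DERIV_imp_deriv, rule poly_DERIV)
  then show ?case using Suc by simp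
qed simp

lemma higher_pderiv_eq_0:
  assumes "\<And>k. k \<ge> n \<Longrightarrow> coeff p k = 0"
  shows "(pderiv ^^ n) p = 0"
  by (rule poly_eqI) (simp add: coeff_higher_pderiv assms)

lemma higher_deriv_eq_0_iff_taylor_coeff_eq_0:
  assumes hol: "g holomorphic_on ball 0 r" and "r > 0"
  shows "(\<forall>z\<in>ball 0 r. (deriv ^^ n) g z = 0) \<longleftrightarrow> (\<forall>k\<ge>n. taylor_coeff g k = 0)"
proof
  assume vanish: "\<forall>z\<in>ball 0 r. (deriv ^^ n) g z = 0"
  have near_0: "eventually (\<lambda>z. (deriv ^^ n) g z = 0) (nhds 0)"
    using eventually_nhds_in_open[of "ball 0 r" 0] \<open>r > 0\<close> vanish
    by (auto elim: eventually_mono)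
  show "\<forall>k\<ge>n. taylor_coeff g k = 0"
  proof (intro allI impI)
    fix k assume "k \<ge> n"
    then have "(deriv ^^ k) g 0 = (deriv ^^ (k - n)) ((deriv ^^ n) g) 0"
      by (metis funpow_add le_add_diff_inverse2 o_apply)
    also have "\<dots> = (deriv ^^ (k - n)) (\<lambda>_. 0) 0"
      using near_0 by (rule higher_deriv_cong_ev) simp
    finally show "taylor_coeff g k = 0" by (simp add: taylor_coeff_def)
  qed
next
  assume coeffs: "\<forall>k\<ge>n. taylor_coeff g k = 0"
  define p where "p = (\<Sum>k<n. monom (taylor_coeff g k) k)"
  have g_eq_p: "g w = poly p w" if "w \<in> ball 0 r" for w
  proof -
    have "(\<lambda>k. taylor_coeff g k * w ^ k) sums (\<Sum>k<n. taylor_coeff g k * w ^ k)"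
      by (rule sums_finite) (use coeffs in auto)
    then show ?thesis
      using taylor_coeff_sums[OF hol that] sums_unique2
      by (fastforce simp: p_def poly_sum poly_monom)
  qed
  have "(pderiv ^^ n) p = 0"
    by (rule higher_pderiv_eq_0) (simp add: p_def coeff_sum)
  show "\<forall>z\<in>ball 0 r. (deriv ^^ n) g z = 0"
  proof
    fix z :: complex assume "z \<in> ball 0 r"
    then have "eventually (\<lambda>w. g w = poly p w) (nhds z)"
      using eventually_nhds_in_open[of "ball 0 r" z] g_eq_p by (auto elim: eventually_mono)
    then have "(deriv ^^ n) g z = (deriv ^^ n) (poly p) z"
      by (rule higher_deriv_cong_ev) simp
    then show "(deriv ^^ n) g z = 0"
      by (simp add: higher_deriv_poly \<open>(pderiv ^^ n) p = 0\<close>)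
  qed
qed

lemma summable_on_atLeast_imp_LIMSEQ_0:
  fixes f :: "nat \<Rightarrow> 'a :: banach"
  assumes "f summable_on {j..}"
  shows "f \<longlonglongrightarrow> 0"
proof -
  have "UNIV = {..<j} \<union> {j..}" by auto
  moreover have "f summable_on ({..<j} \<union> {j..})"
    by (rule summable_on_Un_disjoint) (auto simp: assms)
  ultimately have "summable f"
    by (simp add: summable_on_imp_summable)
  then show ?thesis by (rule summable_LIMSEQ_zero)
qed

lemma norm_eq_if_unimodular_recurrence:
  fixes a :: "nat \<Rightarrow> 'a :: real_normed_field"
  assumes "norm lam = 1" and rec: "\<And>k. k \<ge> j \<Longrightarrow> a k = lam * a (Suc k)" and "k \<ge> j"
  shows "norm (a k) = norm (a j)"
  using \<open>k \<ge> j\<close>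
proof (induction k rule: dec_induct)
  case (step k)
  then show ?case using rec[of k] \<open>norm lam = 1\<close> by (simp add: norm_mult)
qed simp

lemma unimodular_recurrence_weighted_summable_imp_eq_0:
  fixes a :: "nat \<Rightarrow> complex"
  assumes "cmod lam = 1" and rec: "\<And>k. k \<ge> j \<Longrightarrow> a k = lam * a (Suc k)"
    and summable: "(\<lambda>k. real (k choose j) * (cmod (a k))\<^sup>2) summable_on {j..}"
    and "k \<ge> j"
  shows "a k = 0"
proof -
  have "(cmod (a j))\<^sup>2 \<le> real (k choose j) * (cmod (a k))\<^sup>2" if "k \<ge> j" for k
  proof -
    have "real (k choose j) \<ge> 1"
      using zero_less_binomial[OF that] by linarith
    then show ?thesis
      using norm_eq_if_unimodular_recurrence[where a = a and j = j, OF assms(1) rec that]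
      by (simp add: mult_le_cancel_right1)
  qed
  then have "(cmod (a j))\<^sup>2 \<le> 0"
    using LIMSEQ_le_const[OF summable_on_atLeast_imp_LIMSEQ_0[OF summable]] by blast
  then show ?thesis
    using norm_eq_if_unimodular_recurrence[where a = a and j = j, OF assms(1) rec \<open>k \<ge> j\<close>] by simp
qed

lemma D_sigma_eq_0_iff:
  assumes "f \<in> H_sigma j"
  shows "D_sigma j f = 0 \<longleftrightarrow> (\<forall>k\<ge>j. taylor_coeff f k = 0)"
proof
  assume D0: "D_sigma j f = 0"
  show "\<forall>k\<ge>j. taylor_coeff f k = 0"
  proof (intro allI impI)
    fix k assume "k \<ge> j"
    have "real (k choose j) * (cmod (taylor_coeff f k))\<^sup>2 = 0"
      by (rule nonneg_infsum_le_0D[of _ "{j..}"])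
        (use D0 assms \<open>k \<ge> j\<close> in \<open>auto simp: D_sigma_def H_sigma_def\<close>)
    then show "taylor_coeff f k = 0"
      using zero_less_binomial[OF \<open>k \<ge> j\<close>] by simp
  qed
qed (auto simp: D_sigma_def intro!: infsum_0)

theorem lemma2p2:
  fixes lam :: complex and n :: nat and f :: "complex \<Rightarrow> complex"
  assumes "cmod lam = 1"
    and "n \<ge> 1"
    and "f \<in> H_sigma (n - 1)"
  shows "(\<forall>z\<in>ball 0 1. (deriv ^^ n) (\<lambda>w. (w - lam) * f w) z = 0) \<longleftrightarrow> D_sigma (n - 1) f = 0"
proof -
  define j where "j = n - 1"
  have n: "n = Suc j" using \<open>n \<ge> 1\<close> by (simp add: j_def)
  have hol: "f holomorphic_on ball 0 1" and summable:
      "(\<lambda>k. real (k choose j) * (cmod (taylor_coeff f k))\<^sup>2) summable_on {j..}"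
    using assms(3) by (simp_all add: H_sigma_def j_def)
  have shift: "(\<forall>k\<ge>Suc j. P k) \<longleftrightarrow> (\<forall>k\<ge>j. P (Suc k))" for P
    by (auto dest: Suc_le_D)
  have "(\<forall>z\<in>ball 0 1. (deriv ^^ n) (\<lambda>w. (w - lam) * f w) z = 0)
          \<longleftrightarrow> (\<forall>k\<ge>n. taylor_coeff (\<lambda>w. (w - lam) * f w) k = 0)"
    by (rule higher_deriv_eq_0_iff_taylor_coeff_eq_0) (use hol in \<open>auto intro!: holomorphic_intros\<close>)
  also have "\<dots> \<longleftrightarrow> (\<forall>k\<ge>j. taylor_coeff f k = lam * taylor_coeff f (Suc k))"
    unfolding n shift by (simp add: taylor_coeff_linear_factor[OF hol])
  also have "\<dots> \<longleftrightarrow> (\<forall>k\<ge>j. taylor_coeff f k = 0)"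
  proof
    assume rec: "\<forall>k\<ge>j. taylor_coeff f k = lam * taylor_coeff f (Suc k)"
    show "\<forall>k\<ge>j. taylor_coeff f k = 0"
      using unimodular_recurrence_weighted_summable_imp_eq_0[OF \<open>cmod lam = 1\<close> _ summable] rec
      by blast
  qed simp
  also have "\<dots> \<longleftrightarrow> D_sigma j f = 0"
    using D_sigma_eq_0_iff assms(3) by (simp add: j_def)
  finally show ?thesis by (simp add: j_def)
qed

end
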